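(* Let $m\ge1$, $n\ge1$, fix $t_0\in\mathbb{Z}^m$ and let $\mathcal{Z}=\{t\in\mathbb{Z}^m\mid t\ge t_0\}$. Let $T=(T^1,\dots,T^m)\in\mathbb{N}^m$, $T\ne0$. Let $A_\alpha\colon\mathcal{Z}\to\mathcal{M}_n(\mathbb{C})$, $\alpha\in\{1,\dots,m\}$, satisfy $$A_\alpha(t+1_\beta)A_\beta(t)=A_\beta(t+1_\alpha)A_\alpha(t),\quad \forall t\in\mathcal{Z},\ \forall\alpha,\beta,$$ and suppose $A_\alpha(t)$ is invertible for all $\alpha$ and all $t\in\mathcal{Z}$. Let $\Phi(t)=\chi(t,t_0)$, $t\in\mathcal{Z}$. Assume there exist a function $P\colon\mathcal{Z}\to\mathcal{M}_n(\mathbb{C})$, periodic of period $T$ (i.e. $P(t+T)=P(t)$ for all $t\in\mathcal{Z}$), and a constant invertible matrix $B\in\mathcal{M}_n(\mathbb{C})$ such that $\Phi(t)=P(t)B^{|t|}$ for all $t\ge t_0$, where $|t|=t^1+\dots+t^m$. Consider the recurrences $$x(t+1_\alpha)=A_\alpha(t)x(t),\quad\forall t\ge t_0,\ \forall\alpha\in\{1,\dots,m\},\qquad (1)$$ $$y(t+1_\alpha)=B\,y(t),\quad\forall t\ge t_0,\ \forall\alpha\in\{1,\dots,m\},\qquad (2)$$ for functions $x,y\colon\mathcal{Z}\to\mathbb{C}^n$. Then (each $P(t)$ being invertible) if $y$ is a solution of (2), then $x(t):=P(t)y(t)$ is a solution of (1); and conversely, if $x$ is a solution of (1), then $y(t):=P(t)^{-1}x(t)$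 is a solution of (2).
   Context: $\mathbb{N}=\{0,1,2,\dots\}$; $1_\alpha\in\mathbb{Z}^m$ has $1$ in position $\alpha$ and $0$ elsewhere; $s\le t$ in $\mathbb{Z}^m$ means $s^\alpha\le t^\alpha$ for all $\alpha$. Under the compatibility relations, for each $s\in\mathcal{Z}$ there is a unique $\chi(\cdot,s)\colon\{t\in\mathcal{Z}\mid t\ge s\}\to\mathcal{M}_n(\mathbb{C})$ with $\chi(s,s)=I_n$ and $\chi(t+1_\alpha,s)=A_\alpha(t)\chi(t,s)$ for all $t\ge s$ and all $\alpha$ (the transition matrix). Negative integer powers of $B$ are powers of $B^{-1}$. *)

theory Defs
  imports "HOL-Analysis.Analysis"
begin

text \<open>Lattice points t in Z^m are modelled as int ^ 'm (the finite type 'm indexes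
  the directions 1..m); n x n complex matrices as complex ^ 'n ^ 'n, with matrix
  product (**) and matrix-vector product ( *v ).\<close>

definition zle :: "int ^ 'm \<Rightarrow> int ^ 'm \<Rightarrow> bool" where
  "zle s t \<longleftrightarrow> (\<forall>i. s $ i \<le> t $ i)"

definition unitv :: "'m::finite \<Rightarrow> int ^ 'm" where
  "unitv \<alpha> = (\<chi> i. if i = \<alpha> then 1 else 0)"

definition zabs :: "int ^ 'm::finite \<Rightarrow> int" where
  "zabs t = (\<Sum>i\<in>UNIV. t $ i)"

fun mpow :: "complex ^ 'n ^ 'n \<Rightarrow> nat \<Rightarrow> complex ^ 'n ^ 'n" where
  "mpow B 0 = mat 1"
| "mpow B (Suc k) = B ** mpow B k"

definition mpow_int :: "complex ^ 'n ^ 'n \<Rightarrow> int \<Rightarrow> complex ^ 'n ^ 'n" where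
  "mpow_int B k = (if 0 \<le> k then mpow B (nat k) else mpow (matrix_inv B) (nat (- k)))"

text \<open>Transition matrix chi(t,s), defined for t \<ge> s (extended by 0 elsewhere so that
  the defining description has a unique solution under the compatibility relations).\<close>
definition transition ::
  "('m::finite \<Rightarrow> int ^ 'm \<Rightarrow> complex ^ 'n ^ 'n) \<Rightarrow> int ^ 'm \<Rightarrow> int ^ 'm \<Rightarrow> complex ^ 'n ^ 'n" where
  "transition A t s = (THE f. f s = mat 1
      \<and> (\<forall>u. \<not> zle s u \<longrightarrow> f u = 0)
      \<and> (\<forall>u \<alpha>. zle s u \<longrightarrow> f (u + unitv \<alpha>) = A \<alpha> u ** f u)) t"

end

theory Submission
  imports Defs
begin

text \<open>The compatibility relations make the product of the \<open>A\<^sub>\<alpha>\<close> along a monotone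
  lattice path from \<open>t\<^sub>0\<close> to \<open>t\<close> independent of the path; this realises \<open>\<chi>(\<cdot>,t\<^sub>0)\<close>, so
  \<open>\<Phi>(t + 1\<^sub>\<alpha>) = A\<^sub>\<alpha>(t) \<Phi>(t)\<close> and every \<open>\<Phi>(t)\<close> is invertible. Inserting
  \<open>\<Phi>(t) = P(t) B\<^bsup>|t|\<^esup>\<close> and cancelling the invertible \<open>B\<^bsup>|t|\<^esup>\<close> shows that \<open>P(t)\<close> is
  invertible and \<open>P(t + 1\<^sub>\<alpha>) B = A\<^sub>\<alpha>(t) P(t)\<close>, i.e. \<open>P\<close> intertwines the two systems;
  both correspondences of solutions follow at once.\<close>

lemma matrix_inv_right:
  fixes M :: "'a::semiring_1^'n^'n"
  assumes "invertible M"
  shows "M ** matrix_inv M = mat 1"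
  using someI_ex[OF assms[unfolded invertible_def]] unfolding matrix_inv_def by blast

lemma matrix_inv_left:
  fixes M :: "'a::semiring_1^'n^'n"
  assumes "invertible M"
  shows "matrix_inv M ** M = mat 1"
  using someI_ex[OF assms[unfolded invertible_def]] unfolding matrix_inv_def by blast

lemma invertible_matrix_inv:
  fixes M :: "'a::semiring_1^'n^'n"
  shows "invertible M \<Longrightarrow> invertible (matrix_inv M)"
  using matrix_inv_left matrix_inv_right unfolding invertible_def by blast

lemma invertible_mat_1: "invertible (mat 1 :: 'a::semiring_1^'n^'n)"
  unfolding invertible_def by (rule exI[of _ "mat 1"]) simp

lemma matrix_mul_right_cancel_invertible:
  fixes M X Y :: "'a::semiring_1^'n^'n"
  assumes "invertible M" and "X ** M = Y ** M"
  shows "X = Y"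
  by (metis assms matrix_inv_right matrix_mul_assoc matrix_mul_rid)

lemma matrix_inv_intertwine:
  fixes Q R A B :: "'a::semiring_1^'n^'n"
  assumes "invertible Q" and "invertible R" and "Q ** B = A ** R"
  shows "matrix_inv Q ** A = B ** matrix_inv R"
proof -
  have "matrix_inv Q ** A = matrix_inv Q ** A ** (R ** matrix_inv R)"
    by (simp add: matrix_inv_right[OF assms(2)])
  also have "\<dots> = matrix_inv Q ** (A ** R) ** matrix_inv R"
    by (simp add: matrix_mul_assoc)
  also have "\<dots> = B ** matrix_inv R"
    using matrix_inv_left[OF assms(1)] by (simp flip: assms(3) add: matrix_mul_assoc)
  finally show ?thesis .
qed

lemma unitv_nth [simp]: "unitv \<alpha> $ i = (if i = \<alpha> then 1 else 0)"
  by (simp add: unitv_def)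

lemma zabs_add: "zabs (u + v) = zabs u + zabs v"
  by (simp add: zabs_def sum.distrib)

lemma zabs_diff: "zabs (u - v) = zabs u - zabs v"
  by (simp add: zabs_def sum_subtractf)

lemma zabs_unitv [simp]: "zabs (unitv \<alpha>) = 1"
  by (simp add: zabs_def)

lemma zabs_diff_nonneg: "zle s u \<Longrightarrow> 0 \<le> zabs (u - s)"
  unfolding zabs_def zle_def by (auto intro: sum_nonneg)

lemma zle_zabs_diff_eq_0: "zle s u \<Longrightarrow> zabs (u - s) = 0 \<Longrightarrow> u = s"
  unfolding zabs_def zle_def
  by (subst (asm) sum_nonneg_eq_0_iff) (auto simp: vec_eq_iff)

lemma zabs_diff_ge_2:
  assumes "zle s u" "\<alpha> \<noteq> \<beta>" "s $ \<alpha> < u $ \<alpha>" "s $ \<beta> < u $ \<beta>"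
  shows "2 \<le> zabs (u - s)"
proof -
  have "2 \<le> (\<Sum>i\<in>{\<alpha>, \<beta>}. (u - s) $ i)"
    using assms by simp
  also have "\<dots> \<le> (\<Sum>i\<in>UNIV. (u - s) $ i)"
    using assms(1) by (intro sum_mono2) (auto simp: zle_def)
  finally show ?thesis unfolding zabs_def .
qed

lemma zle_add_unitv: "zle s u \<Longrightarrow> zle s (u + unitv \<alpha>)"
  unfolding zle_def by (metis add.right_neutral add_increasing2 unitv_nth vector_add_component zero_le_one order_refl)

lemma zle_diff_unitv: "zle s u \<Longrightarrow> s $ \<alpha> < u $ \<alpha> \<Longrightarrow> zle s (u - unitv \<alpha>)"
  by (auto simp: zle_def)

lemma zle_neq_ex_less: "zle s u \<Longrightarrow> u \<noteq> s \<Longrightarrow> \<exists>\<alpha>. s $ \<alpha> < u $ \<alpha>"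
  by (metis zle_def vec_eq_iff order.not_eq_order_implies_strict)

lemma zle_down_induct [consumes 1, case_names base step]:
  assumes "zle s u"
    and base: "Q s"
    and step: "\<And>v \<alpha>. zle s v \<Longrightarrow> s $ \<alpha> < v $ \<alpha> \<Longrightarrow> Q (v - unitv \<alpha>) \<Longrightarrow> Q v"
  shows "Q u"
  using assms(1)
proof (induction "nat (zabs (u - s))" arbitrary: u)
  case 0
  then have "u = s" using zle_zabs_diff_eq_0 zabs_diff_nonneg by fastforce
  then show ?case using base by simp
next
  case (Suc k)
  then have "u \<noteq> s" by (auto simp: zabs_def)
  then obtain \<alpha> where \<alpha>: "s $ \<alpha> < u $ \<alpha>" using zle_neq_ex_less Suc.prems by blast
  have "k = nat (zabs (u - unitv \<alpha> - s))"
    using Suc.hyps(2) zabs_diff_nonneg[OF Suc.prems] by (simp add: zabs_diff)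
  then have "Q (u - unitv \<alpha>)" using Suc.hyps(1) zle_diff_unitv[OF Suc.prems \<alpha>] by blast
  then show ?case using step[OF Suc.prems \<alpha>] by simp
qed

fun path_prod ::
  "('m::finite \<Rightarrow> int^'m \<Rightarrow> 'a::semiring_1^'n^'n) \<Rightarrow> int^'m \<Rightarrow> nat \<Rightarrow> int^'m \<Rightarrow> 'a^'n^'n"
where
  "path_prod A s 0 u = mat 1"
| "path_prod A s (Suc k) u =
     (let \<alpha> = (SOME \<alpha>. s $ \<alpha> < u $ \<alpha>) in A \<alpha> (u - unitv \<alpha>) ** path_prod A s k (u - unitv \<alpha>))"

definition path_transition ::
  "('m::finite \<Rightarrow> int^'m \<Rightarrow> 'a::semiring_1^'n^'n) \<Rightarrow> int^'m \<Rightarrow> int^'m \<Rightarrow> 'a^'n^'n"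
where
  "path_transition A s u = (if zle s u then path_prod A s (nat (zabs (u - s))) u else 0)"

lemma path_transition_self: "path_transition A s s = mat 1"
  by (simp add: path_transition_def zle_def zabs_def)

locale compatible_system =
  fixes A :: "'m::finite \<Rightarrow> int^'m \<Rightarrow> 'a::semiring_1^'n^'n" and s :: "int^'m"
  assumes compat: "zle s w \<Longrightarrow> A \<alpha> (w + unitv \<beta>) ** A \<beta> w = A \<beta> (w + unitv \<alpha>) ** A \<alpha> w"
begin

text \<open>Path independence: two different last steps \<open>\<alpha>, \<beta>\<close> are reconciled by one
  compatibility relation at \<open>u - 1\<^sub>\<alpha> - 1\<^sub>\<beta>\<close> and induction on the path length.\<close>

lemma path_prod_last_step:
  "zle s u \<Longrightarrow> zabs (u - s) = int (Suc k) \<Longrightarrow> s $ \<alpha> < u $ \<alpha> \<Longrightarrow>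
     path_prod A s (Suc k) u = A \<alpha> (u - unitv \<alpha>) ** path_prod A s k (u - unitv \<alpha>)"
proof (induction k arbitrary: u \<alpha>)
  case 0
  define \<beta> where "\<beta> = (SOME \<alpha>. s $ \<alpha> < u $ \<alpha>)"
  have "s $ \<beta> < u $ \<beta>" unfolding \<beta>_def by (rule someI) (rule "0.prems"(3))
  then have "\<beta> = \<alpha>" using zabs_diff_ge_2[OF "0.prems"(1) _ _ "0.prems"(3)] "0.prems"(2) by force
  then show ?case by (simp add: \<beta>_def[symmetric] Let_def)
next
  case (Suc k)
  define \<beta> where "\<beta> = (SOME \<alpha>. s $ \<alpha> < u $ \<alpha>)"
  have \<beta>: "s $ \<beta> < u $ \<beta>" unfolding \<beta>_def by (rule someI) (rule Suc.prems(3))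
  have by_\<beta>: "path_prod A s (Suc (Suc k)) u = A \<beta> (u - unitv \<beta>) ** path_prod A s (Suc k) (u - unitv \<beta>)"
    by (simp add: \<beta>_def[symmetric] Let_def)
  show ?case
  proof (cases "\<beta> = \<alpha>")
    case True
    then show ?thesis using by_\<beta> by simp
  next
    case False
    define w where "w = u - unitv \<alpha> - unitv \<beta>"
    have w_eqs: "u - unitv \<beta> - unitv \<alpha> = w" "w + unitv \<alpha> = u - unitv \<beta>" "w + unitv \<beta> = u - unitv \<alpha>"
      by (simp_all add: w_def algebra_simps)
    have \<alpha>': "s $ \<alpha> < (u - unitv \<beta>) $ \<alpha>" and \<beta>': "s $ \<beta> < (u - unitv \<alpha>) $ \<beta>"
      using Suc.prems(3) \<beta> False by auto
    have le_\<alpha>: "zle s (u - unitv \<alpha>)" and le_\<beta>: "zle s (u - unitv \<beta>)"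
      using zle_diff_unitv Suc.prems(1) Suc.prems(3) \<beta> by blast+
    have "zle s w" using zle_diff_unitv[OF le_\<alpha> \<beta>'] by (simp add: w_def)
    have ih_\<beta>: "path_prod A s (Suc k) (u - unitv \<beta>) = A \<alpha> w ** path_prod A s k w"
      using Suc.IH[OF le_\<beta> _ \<alpha>'] Suc.prems(2) w_eqs(1) by (simp add: zabs_diff)
    have ih_\<alpha>: "path_prod A s (Suc k) (u - unitv \<alpha>) = A \<beta> w ** path_prod A s k w"
      using Suc.IH[OF le_\<alpha> _ \<beta>'] Suc.prems(2) by (simp add: zabs_diff w_def)
    have "path_prod A s (Suc (Suc k)) u = (A \<beta> (w + unitv \<alpha>) ** A \<alpha> w) ** path_prod A s k w"
      using by_\<beta> ih_\<beta> w_eqs(2) by (simp add: matrix_mul_assoc)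
    also have "\<dots> = (A \<alpha> (w + unitv \<beta>) ** A \<beta> w) ** path_prod A s k w"
      using compat[OF \<open>zle s w\<close>] by simp
    also have "\<dots> = A \<alpha> (u - unitv \<alpha>) ** path_prod A s (Suc k) (u - unitv \<alpha>)"
      using ih_\<alpha> w_eqs(3) by (simp add: matrix_mul_assoc)
    finally show ?thesis .
  qed
qed

lemma path_transition_step:
  assumes "zle s u"
  shows "path_transition A s (u + unitv \<alpha>) = A \<alpha> u ** path_transition A s u"
proof -
  have len: "zabs (u + unitv \<alpha> - s) = int (Suc (nat (zabs (u - s))))"
    using zabs_diff_nonneg[OF \<open>zle s u\<close>] by (simp add: zabs_diff zabs_add)
  have "s $ \<alpha> < (u + unitv \<alpha>) $ \<alpha>"
    using \<open>zle s u\<close> by (simp add: zle_def)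
  from path_prod_last_step[OF zle_add_unitv[OF \<open>zle s u\<close>] len this]
  have "path_prod A s (nat (zabs (u + unitv \<alpha> - s))) (u + unitv \<alpha>)
      = A \<alpha> u ** path_prod A s (nat (zabs (u - s))) u"
    by (simp only: len nat_int add_diff_cancel)
  then show ?thesis
    using \<open>zle s u\<close> zle_add_unitv[OF \<open>zle s u\<close>] by (simp add: path_transition_def)
qed

end

lemma transition_eq_path_transition:
  fixes A :: "'m::finite \<Rightarrow> int^'m \<Rightarrow> complex^'n^'n"
  assumes compat: "compatible_system A s"
  shows "transition A t s = path_transition A s t"
proof -
  let ?Q = "\<lambda>f. f s = mat 1 \<and> (\<forall>u. \<not> zle s u \<longrightarrow> f u = 0)
      \<and> (\<forall>u \<alpha>. zle s u \<longrightarrow> f (u + unitv \<alpha>) = A \<alpha> u ** f u)"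
  have "(THE f. ?Q f) = path_transition A s"
  proof (rule the_equality)
    show "?Q (path_transition A s)"
    proof (intro conjI allI impI)
      show "path_transition A s s = mat 1" by (rule path_transition_self)
    next
      fix u assume "\<not> zle s u"
      then show "path_transition A s u = 0" by (simp add: path_transition_def)
    next
      fix u \<alpha> assume "zle s u"
      then show "path_transition A s (u + unitv \<alpha>) = A \<alpha> u ** path_transition A s u"
        by (rule compatible_system.path_transition_step[OF compat])
    qed
  next
    fix g assume g: "?Q g"
    show "g = path_transition A s"
    proof
      fix u
      show "g u = path_transition A s u"
      proof (cases "zle s u")
        case False
        then show ?thesis using g by (simp add: path_transition_def)
      next
        case True
        then show ?thesis
        proof (induction rule: zle_down_induct)
          case base
          then show ?case using g path_transition_self by metis
        next
          case (step v \<alpha>)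
          have le: "zle s (v - unitv \<alpha>)" using zle_diff_unitv[OF step.hyps] .
          have "g v = A \<alpha> (v - unitv \<alpha>) ** g (v - unitv \<alpha>)"
            using g le by (metis diff_add_cancel)
          also have "\<dots> = path_transition A s v"
            using step.IH compatible_system.path_transition_step[OF compat le, of \<alpha>] by simp
          finally show ?case .
        qed
      qed
    qed
  qed
  then show ?thesis unfolding transition_def by simp
qed

lemma transition_self:
  fixes A :: "'m::finite \<Rightarrow> int^'m \<Rightarrow> complex^'n^'n"
  assumes "compatible_system A s"
  shows "transition A s s = mat 1"
  by (simp add: transition_eq_path_transition[OF assms] path_transition_self)

lemma transition_step:
  fixes A :: "'m::finite \<Rightarrow> int^'m \<Rightarrow> complex^'n^'n"
  assumes compat: "compatible_system A s"
    and "zle s u"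
  shows "transition A (u + unitv \<alpha>) s = A \<alpha> u ** transition A u s"
  using compatible_system.path_transition_step[OF assms]
  by (simp add: transition_eq_path_transition[OF compat])

lemma invertible_transition:
  fixes A :: "'m::finite \<Rightarrow> int^'m \<Rightarrow> complex^'n^'n"
  assumes compat: "compatible_system A s"
    and A_inv: "\<And>w \<alpha>. zle s w \<Longrightarrow> invertible (A \<alpha> w)"
    and "zle s u"
  shows "invertible (transition A u s)"
  using \<open>zle s u\<close>
proof (induction rule: zle_down_induct)
  case base
  then show ?case by (simp add: transition_self[OF compat] invertible_mat_1)
next
  case (step v \<alpha>)
  have le: "zle s (v - unitv \<alpha>)" using zle_diff_unitv[OF step.hyps] .
  have "transition A v s = A \<alpha> (v - unitv \<alpha>) ** transition A (v - unitv \<alpha>) s"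
    using transition_step[OF compat le, of \<alpha>] by simp
  then show ?case using invertible_mult[OF A_inv[OF le] step.IH] by simp
qed

lemma invertible_mpow: "invertible B \<Longrightarrow> invertible (mpow B k)"
  by (induction k) (simp_all add: invertible_mat_1 invertible_mult)

lemma invertible_mpow_int: "invertible B \<Longrightarrow> invertible (mpow_int B k)"
  by (simp add: mpow_int_def invertible_mpow invertible_matrix_inv)

lemma mpow_int_add_1:
  assumes "invertible B"
  shows "mpow_int B (k + 1) = B ** mpow_int B k"
proof (cases "0 \<le> k")
  case True
  then have "nat (k + 1) = Suc (nat k)" by simp
  then show ?thesis using True by (simp add: mpow_int_def)
next
  case False
  then have "nat (- k) = Suc (nat (- (k + 1)))" by simp
  then have "B ** mpow_int B k = (B ** matrix_inv B) ** mpow (matrix_inv B) (nat (- (k + 1)))"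
    using False by (simp add: mpow_int_def matrix_mul_assoc)
  also have "\<dots> = mpow_int B (k + 1)"
    using matrix_inv_right[OF assms] False by (auto simp: mpow_int_def)
  finally show ?thesis by simp
qed

lemma invertible_floquet_factor:
  fixes A :: "'m::finite \<Rightarrow> int^'m \<Rightarrow> complex^'n^'n"
  assumes compat: "compatible_system A t0"
    and A_inv: "\<And>w \<alpha>. zle t0 w \<Longrightarrow> invertible (A \<alpha> w)"
    and floquet: "transition A t t0 = P ** mpow_int B (zabs t)"
    and "zle t0 t"
  shows "invertible P"
proof -
  have "det (P ** mpow_int B (zabs t)) \<noteq> 0"
    using invertible_transition[OF compat A_inv \<open>zle t0 t\<close>] floquet invertible_det_nz by metis
  then show ?thesis by (simp add: det_mul invertible_det_nz)
qed

lemma floquet_factor_step: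
  fixes A :: "'m::finite \<Rightarrow> int^'m \<Rightarrow> complex^'n^'n"
  assumes compat: "compatible_system A t0"
    and B_inv: "invertible B"
    and floquet: "\<And>t. zle t0 t \<Longrightarrow> transition A t t0 = P t ** mpow_int B (zabs t)"
    and "zle t0 t"
  shows "P (t + unitv \<alpha>) ** B = A \<alpha> t ** P t"
proof (rule matrix_mul_right_cancel_invertible)
  show "invertible (mpow_int B (zabs t))" using invertible_mpow_int[OF B_inv] .
  have "P (t + unitv \<alpha>) ** B ** mpow_int B (zabs t) = transition A (t + unitv \<alpha>) t0"
    using floquet[OF zle_add_unitv[OF \<open>zle t0 t\<close>]] mpow_int_add_1[OF B_inv]
    by (simp add: zabs_add matrix_mul_assoc)
  also have "\<dots> = A \<alpha> t ** P t ** mpow_int B (zabs t)"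
    using transition_step[OF compat \<open>zle t0 t\<close>] floquet[OF \<open>zle t0 t\<close>] by (simp add: matrix_mul_assoc)
  finally show "P (t + unitv \<alpha>) ** B ** mpow_int B (zabs t) = A \<alpha> t ** P t ** mpow_int B (zabs t)" .
qed

theorem theorem2p18:
  fixes t0 :: "int ^ 'm::finite"
    and T :: "nat ^ 'm"
    and A :: "'m \<Rightarrow> int ^ 'm \<Rightarrow> complex ^ 'n::finite ^ 'n"
    and P :: "int ^ 'm \<Rightarrow> complex ^ 'n ^ 'n"
    and B :: "complex ^ 'n ^ 'n"
  assumes T_nz: "T \<noteq> 0"
    and compat: "\<And>t \<alpha> \<beta>. zle t0 t \<Longrightarrow>
        A \<alpha> (t + unitv \<beta>) ** A \<beta> t = A \<beta> (t + unitv \<alpha>) ** A \<alpha> t"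
    and A_inv: "\<And>t \<alpha>. zle t0 t \<Longrightarrow> invertible (A \<alpha> t)"
    and P_per: "\<And>t. zle t0 t \<Longrightarrow> P (t + (\<chi> i. int (T $ i))) = P t"
    and B_inv: "invertible B"
    and floquet: "\<And>t. zle t0 t \<Longrightarrow> transition A t t0 = P t ** mpow_int B (zabs t)"
  shows "(\<forall>t. zle t0 t \<longrightarrow> invertible (P t))
    \<and> (\<forall>y :: int ^ 'm \<Rightarrow> complex ^ 'n.
          (\<forall>t \<alpha>. zle t0 t \<longrightarrow> y (t + unitv \<alpha>) = B *v y t) \<longrightarrow>
          (\<forall>t \<alpha>. zle t0 t \<longrightarrow> P (t + unitv \<alpha>) *v y (t + unitv \<alpha>) = A \<alpha> t *v (P t *v y t)))
    \<and> (\<forall>x :: int ^ 'm \<Rightarrow> complex ^ 'n.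
          (\<forall>t \<alpha>. zle t0 t \<longrightarrow> x (t + unitv \<alpha>) = A \<alpha> t *v x t) \<longrightarrow>
          (\<forall>t \<alpha>. zle t0 t \<longrightarrow> matrix_inv (P (t + unitv \<alpha>)) *v x (t + unitv \<alpha>)
                                 = B *v (matrix_inv (P t) *v x t)))"
proof -
  have system: "compatible_system A t0"
    using compat by unfold_locales
  have P_inv: "invertible (P t)" if "zle t0 t" for t
    using invertible_floquet_factor[OF system A_inv floquet] that by blast
  have P_step: "P (t + unitv \<alpha>) ** B = A \<alpha> t ** P t" if "zle t0 t" for t \<alpha>
    using floquet_factor_step[OF system B_inv floquet that] .
  have P_inv_step: "matrix_inv (P (t + unitv \<alpha>)) ** A \<alpha> t = B ** matrix_inv (P t)"
    if "zle t0 t" for t \<alpha>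
    using matrix_inv_intertwine P_inv P_step zle_add_unitv that by blast
  show ?thesis
    using P_inv P_step P_inv_step by (simp add: matrix_vector_mul_assoc)
qed

end
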